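(* Let $\alpha<_c\beta$ with $\beta/\!\!/\alpha$ an nc border strip with $n$ boxes, and let $w\in CRHW_n$ satisfy $w(\alpha)=\beta$. If $j\in SE(\beta/\!\!/\alpha)$, then $j\notin\mathrm{leg}(w)$.
   Context: A composition is a finite sequence $\alpha=(\alpha_1,\dots,\alpha_k)$ of positive integers; $\ell(\alpha)=k$; its diagram is the set of boxes $(i,j)$, $1\le i\le\ell(\alpha)$, $1\le j\le\alpha_i$, rows top to bottom, columns left to right. For compositions $\gamma=(\gamma_1,\dots,\gamma_l)$, $\delta$ write $\gamma\lessdot_c\delta$ if $\delta=(1,\gamma_1,\dots,\gamma_l)$ or $\delta=(\gamma_1,\dots,\gamma_k+1,\dots,\gamma_l)$ with $\gamma_i\ne\gamma_k$ for all $i<k$; $<_c$ is the transitive closure. For $\gamma<_c\delta$, $\delta/\!\!/\gamma$ consists of the boxes of $\delta$ other than $(\ell(\delta)-\ell(\gamma)+i,j)$, $1\le i\le\ell(\gamma)$, $1\le j\le\gamma_i$. $\mathrm{supp}(\beta/\!\!/\alpha)$ is the set of columns containing a box of $\beta/\!\!/\alpha$; interval shape: supp is a set of consecutive integers. nc border strip: an interval shape such that (1) if $(i,1),(i,2)\in\beta/\!\!/\alpha$ then $(i,1)$ is the bottommost box of column 1 of $\beta/\!\!/\alpha$, and (2) if $(i,j),(i,j+1)\in\beta/\!\!/\alpha$ with $j\ge2$ then $(i,j)$ is the topmost box of column $j$ of $\beta/\!\!/\alpha$. $E(\beta/\!\!/\alpha)$ is the set of $j$ such that $(i,j),(i,j+1)\in\beta/\!\!/\alpha$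 for some $i$; $SE(\beta/\!\!/\alpha)$ is the set of $j\notin E(\beta/\!\!/\alpha)$ for which there are boxes $(i,j),(i',j+1)\in\beta/\!\!/\alpha$ with $i'>i$. Box-adding operators: $\mathfrak t_1(\alpha)=(1,\alpha_1,\dots,\alpha_k)$; for $i\ge2$, $\mathfrak t_i(\alpha)$ increases the leftmost part equal to $i-1$ by $1$, and is $0$ if none; $\mathfrak t_i(0)=0$. A word $w=\mathfrak t_{i_1}\cdots\mathfrak t_{i_n}$ acts by $w(\alpha)=\mathfrak t_{i_1}(\cdots\mathfrak t_{i_n}(\alpha))$; it is a reverse $k$-hookword if $i_1\le\cdots\le i_{k+1}>i_{k+2}>\cdots>i_n$, with $\mathrm{leg}(w)=\{i_{k+1},\dots,i_n\}$; connected if $\{i_1,\dots,i_n\}$ is a set of consecutive integers; $CRHW_n$ is the set of connected reverse hookwords of length $n$. *)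

theory Defs
  imports Main
begin

text \<open>Compositions are lists of positive naturals; rows/columns are 1-indexed.\<close>

definition is_composition :: "nat list \<Rightarrow> bool" where
  "is_composition \<alpha> \<longleftrightarrow> (\<forall>x\<in>set \<alpha>. 0 < x)"

definition incr_at :: "nat \<Rightarrow> nat list \<Rightarrow> nat list" where
  "incr_at k \<gamma> = \<gamma>[k := \<gamma> ! k + 1]"

definition ccover :: "nat list \<Rightarrow> nat list \<Rightarrow> bool" where
  "ccover \<gamma> \<delta> \<longleftrightarrow>
     \<delta> = 1 # \<gamma> \<or>
     (\<exists>k < length \<gamma>. \<delta> = incr_at k \<gamma> \<and> (\<forall>i < k. \<gamma> ! i \<noteq> \<gamma> ! k))"

definition cless :: "nat list \<Rightarrow> nat list \<Rightarrow> bool" where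
  "cless = tranclp ccover"

definition diagram :: "nat list \<Rightarrow> (nat \<times> nat) set" where
  "diagram \<alpha> = {(i, j). 1 \<le> i \<and> i \<le> length \<alpha> \<and> 1 \<le> j \<and> j \<le> \<alpha> ! (i - 1)}"

definition skew :: "nat list \<Rightarrow> nat list \<Rightarrow> (nat \<times> nat) set" where
  "skew \<delta> \<gamma> = diagram \<delta> -
     {(length \<delta> - length \<gamma> + i, j) | i j. 1 \<le> i \<and> i \<le> length \<gamma> \<and> 1 \<le> j \<and> j \<le> \<gamma> ! (i - 1)}"

definition supp :: "(nat \<times> nat) set \<Rightarrow> nat set" where
  "supp S = snd ` S"

definition interval_shape :: "(nat \<times> nat) set \<Rightarrow> bool" where
  "interval_shape S \<longleftrightarrow>
     (\<forall>a b c. a \<in> supp S \<longrightarrow> c \<in> supp S \<longrightarrow> a \<le> b \<longrightarrow> b \<le> c \<longrightarrow> b \<in> supp S)"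

definition nc_border_strip :: "(nat \<times> nat) set \<Rightarrow> bool" where
  "nc_border_strip S \<longleftrightarrow> interval_shape S \<and>
     (\<forall>i. (i, 1) \<in> S \<and> (i, 2) \<in> S \<longrightarrow> (\<forall>i'. (i', 1) \<in> S \<longrightarrow> i' \<le> i)) \<and>
     (\<forall>i j. 2 \<le> j \<and> (i, j) \<in> S \<and> (i, j + 1) \<in> S \<longrightarrow> (\<forall>i'. (i', j) \<in> S \<longrightarrow> i \<le> i'))"

definition Eset :: "(nat \<times> nat) set \<Rightarrow> nat set" where
  "Eset S = {j. \<exists>i. (i, j) \<in> S \<and> (i, j + 1) \<in> S}"

definition SEset :: "(nat \<times> nat) set \<Rightarrow> nat set" where
  "SEset S = {j. j \<notin> Eset S \<and> (\<exists>i i'. (i, j) \<in> S \<and> (i', j + 1) \<in> S \<and> i < i')}"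

text \<open>Box-adding operators; None plays the role of 0.  There is no operator t_0.\<close>
fun top_op :: "nat \<Rightarrow> nat list option \<Rightarrow> nat list option" where
  "top_op i None = None"
| "top_op i (Some \<alpha>) =
     (if i = 0 then None
      else if i = 1 then Some (1 # \<alpha>)
      else if (i - 1) \<in> set \<alpha> then Some (incr_at (LEAST k. \<alpha> ! k = i - 1) \<alpha>)
      else None)"

text \<open>w = t_{i_1} ... t_{i_n} acts by applying t_{i_n} first.\<close>
definition word_act :: "nat list \<Rightarrow> nat list \<Rightarrow> nat list option" where
  "word_act w \<alpha> = foldr top_op w (Some \<alpha>)"

text \<open>Reverse k-hookword (0-based list positions: entries 0..k weakly increasing,
  entries k..n-1 strictly decreasing).\<close>
definition rev_hookword :: "nat \<Rightarrow> nat list \<Rightarrow> bool" where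
  "rev_hookword k w \<longleftrightarrow> k < length w \<and> sorted (take (Suc k) w) \<and>
     sorted_wrt (>) (drop k w)"

definition is_rev_hookword :: "nat list \<Rightarrow> bool" where
  "is_rev_hookword w \<longleftrightarrow> (\<exists>k. rev_hookword k w)"

definition leg :: "nat list \<Rightarrow> nat set" where
  "leg w = set (drop (THE k. rev_hookword k w) w)"

definition connected_word :: "nat list \<Rightarrow> bool" where
  "connected_word w \<longleftrightarrow>
     (\<forall>a b c. a \<in> set w \<longrightarrow> c \<in> set w \<longrightarrow> a \<le> b \<longrightarrow> b \<le> c \<longrightarrow> b \<in> set w)"

definition CRHW :: "nat \<Rightarrow> nat list set" where
  "CRHW n = {w. length w = n \<and> is_rev_hookword w \<and> connected_word w}"

end

theory Submission
  imports Defs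
begin

text \<open>Record a composition by its row lengths counted from the bottom, so that \<open>t\<^sub>c\<close> lengthens
  the topmost row of length \<open>c - 1\<close>. Let \<open>j\<close> be in SE, with the box \<open>(i, j)\<close> ending its row \<open>R1\<close>
  and a box \<open>(i', j + 1)\<close> lower down in row \<open>R2\<close>; as \<open>j\<close> is not in E, \<open>R2\<close> has length \<open>j\<close> in \<open>\<alpha>\<close>.
  In the order in which they act, the letters of a reverse hookword form the strictly increasing
  leg followed by the weakly decreasing arm. The letter \<open>j + 1\<close> lengthening \<open>R2\<close> acts before the
  letter \<open>j\<close> completing \<open>R1\<close> (else \<open>R1\<close>, being above \<open>R2\<close>, would block it), so the latter is in
  the arm. A leg letter \<open>j\<close> would bring a row \<open>R0\<close> below \<open>R2\<close> to its final length \<open>j\<close> even earlier,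
  at a moment when no row above \<open>R0\<close> has length \<open>j - 1\<close>; hence \<open>R1\<close> still needs a letter \<open>j - 1\<close>
  between the leg letter \<open>j\<close> and the arm letter \<open>j\<close>, which an increasing-then-decreasing word
  cannot contain. Only the hook shape of \<open>w\<close> and \<open>w(\<alpha>) = \<beta>\<close> are used.\<close>

definition row :: "nat list \<Rightarrow> nat \<Rightarrow> nat" where
  "row g b = (if b < length g then rev g ! b else 0)"

text \<open>The effect of \<open>t\<^sub>c\<close> on the rows: the leftmost part equal to \<open>c - 1\<close> is the topmost
  row of that length, while \<open>t\<^sub>1\<close> fills the lowest of the empty rows.\<close>

definition adds_box :: "nat \<Rightarrow> (nat \<Rightarrow> nat) \<Rightarrow> (nat \<Rightarrow> nat) \<Rightarrow> nat \<Rightarrow> bool" where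
  "adds_box c R R' b \<longleftrightarrow> 1 \<le> c \<and> R b = c - 1 \<and> R' = R(b := c) \<and>
     (c = 1 \<longrightarrow> (\<forall>b'>b. R b' = 0)) \<and> (2 \<le> c \<longrightarrow> (\<forall>b'>b. R b' \<noteq> c - 1))"

lemma adds_box_le: "adds_box c R R' b \<Longrightarrow> R b' \<le> R' b'"
  by (auto simp: adds_box_def)

lemma top_op_adds_box:
  assumes "top_op c (Some g) = Some d"
  shows "\<exists>b. adds_box c (row g) (row d) b"
proof (cases "c = 1")
  case True
  then have "d = 1 # g" using assms by simp
  then have "row d = (row g)(length g := c)"
    using True by (auto simp: row_def nth_append)
  then show ?thesis using True by (auto simp: adds_box_def row_def)
next
  case False
  with assms have c2: "2 \<le> c" and mem: "c - 1 \<in> set g"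
    by (auto split: if_splits)
  define k where "k = (LEAST k. g ! k = c - 1)"
  obtain k0 where k0: "k0 < length g" "g ! k0 = c - 1"
    using mem by (auto simp: in_set_conv_nth)
  have gk: "g ! k = c - 1"
    unfolding k_def by (rule LeastI[of _ k0]) (rule k0(2))
  have klt: "k < length g"
    using Least_le[of "\<lambda>k. g ! k = c - 1", OF k0(2)] k0(1) unfolding k_def by simp
  have before_k: "g ! k' \<noteq> c - 1" if "k' < k" for k'
    using not_less_Least[OF that[unfolded k_def]] .
  have d: "d = incr_at k g" using assms c2 mem by (simp add: k_def)
  show ?thesis
  proof (intro exI[of _ "length g - Suc k"])
    show "adds_box c (row g) (row d) (length g - Suc k)"
      unfolding adds_box_def
      using klt gk c2 before_k
      by (auto simp: d incr_at_def row_def rev_nth nth_list_update fun_eq_iff)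
  qed
qed

lemma length_le_top_op: "top_op c (Some g) = Some d \<Longrightarrow> length g \<le> length d"
  by (auto simp: incr_at_def split: if_splits)

lemma fold_top_op_None: "fold top_op u None = None"
  by (induction u) auto

lemma length_le_fold_top_op: "fold top_op u (Some \<alpha>) = Some \<beta> \<Longrightarrow> length \<alpha> \<le> length \<beta>"
proof (induction u arbitrary: \<alpha>)
  case (Cons c u)
  then obtain g where "top_op c (Some \<alpha>) = Some g"
    by (cases "top_op c (Some \<alpha>)") (auto simp: fold_top_op_None)
  with Cons show ?case using length_le_top_op by fastforce
qed simp

text \<open>The letters of \<open>u\<close> are listed in the order in which they act, so a word \<open>w\<close> of the
  paper corresponds to \<open>u = rev w\<close>.\<close>

definition partial_act :: "nat list \<Rightarrow> nat list \<Rightarrow> nat \<Rightarrow> nat list option" where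
  "partial_act \<alpha> u m = fold top_op (take m u) (Some \<alpha>)"

definition rows_at :: "nat list \<Rightarrow> nat list \<Rightarrow> nat \<Rightarrow> nat \<Rightarrow> nat" where
  "rows_at \<alpha> u m = row (the (partial_act \<alpha> u m))"

lemma rows_at_0 [simp]: "rows_at \<alpha> u 0 = row \<alpha>"
  by (simp add: rows_at_def partial_act_def)

lemma rows_at_end: "fold top_op u (Some \<alpha>) = Some \<beta> \<Longrightarrow> rows_at \<alpha> u (length u) = row \<beta>"
  by (simp add: rows_at_def partial_act_def)

lemma partial_act_defined:
  assumes "fold top_op u (Some \<alpha>) \<noteq> None"
  shows "partial_act \<alpha> u m \<noteq> None"
proof
  assume "partial_act \<alpha> u m = None"
  moreover have "fold top_op u (Some \<alpha>) = fold top_op (drop m u) (partial_act \<alpha> u m)"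
    by (metis append_take_drop_id comp_apply fold_append partial_act_def)
  ultimately show False
    using assms by (simp add: fold_top_op_None)
qed

lemma rows_at_step:
  assumes "fold top_op u (Some \<alpha>) \<noteq> None" and "m < length u"
  shows "\<exists>b. adds_box (u ! m) (rows_at \<alpha> u m) (rows_at \<alpha> u (Suc m)) b"
proof -
  obtain g d where "partial_act \<alpha> u m = Some g" "partial_act \<alpha> u (Suc m) = Some d"
    using partial_act_defined[OF assms(1)] by fastforce
  moreover have "partial_act \<alpha> u (Suc m) = top_op (u ! m) (partial_act \<alpha> u m)"
    using assms(2) by (simp add: partial_act_def take_Suc_conv_app_nth)
  ultimately show ?thesis
    using top_op_adds_box by (simp add: rows_at_def)
qed

lemma rows_at_mono:
  assumes "fold top_op u (Some \<alpha>) \<noteq> None"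
  shows "mono (\<lambda>m. rows_at \<alpha> u m b)"
  unfolding mono_iff_le_Suc
proof
  fix m
  show "rows_at \<alpha> u m b \<le> rows_at \<alpha> u (Suc m) b"
  proof (cases "m < length u")
    case True
    then show ?thesis using rows_at_step[OF assms] adds_box_le by blast
  next
    case False
    then show ?thesis by (simp add: rows_at_def partial_act_def)
  qed
qed

lemma rows_at_squeeze:
  assumes "fold top_op u (Some \<alpha>) \<noteq> None"
    and "m \<le> m'" "m' \<le> m''" "rows_at \<alpha> u m b = rows_at \<alpha> u m'' b"
  shows "rows_at \<alpha> u m' b = rows_at \<alpha> u m b"
  using monoD[OF rows_at_mono[OF assms(1)], of m m' b] monoD[OF rows_at_mono[OF assms(1)], of m' m'' b]
    assms(2-) by linarith

text \<open>A row is lengthened one box at a time, so every intermediate length is reached by a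
  step adding a box to that row.\<close>

lemma rows_at_crossing:
  assumes defined: "fold top_op u (Some \<alpha>) \<noteq> None"
  shows "m0 \<le> m1 \<Longrightarrow> m1 \<le> length u \<Longrightarrow> rows_at \<alpha> u m0 b < v \<Longrightarrow> v \<le> rows_at \<alpha> u m1 b \<Longrightarrow>
    \<exists>m\<ge>m0. m < m1 \<and> u ! m = v \<and> adds_box v (rows_at \<alpha> u m) (rows_at \<alpha> u (Suc m)) b"
proof (induction m1 rule: dec_induct)
  case (step x)
  show ?case
  proof (cases "v \<le> rows_at \<alpha> u x b")
    case True
    with step show ?thesis by (metis Suc_leD less_SucI)
  next
    case False
    have "x < length u" using step.prems by simp
    then obtain b0 where box: "adds_box (u ! x) (rows_at \<alpha> u x) (rows_at \<alpha> u (Suc x)) b0"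
      using rows_at_step[OF defined] by blast
    with False step.prems have "b0 = b \<and> v = u ! x"
      by (auto simp: adds_box_def split: if_splits)
    with box step.hyps show ?thesis by auto
  qed
qed simp

lemma mem_skew_iff:
  assumes "length a \<le> length c"
  shows "(i, j) \<in> skew c a \<longleftrightarrow>
    1 \<le> i \<and> i \<le> length c \<and> row a (length c - i) < j \<and> j \<le> row c (length c - i)"
proof -
  let ?top = "{(length c - length a + i0, j0) | i0 j0.
    1 \<le> i0 \<and> i0 \<le> length a \<and> 1 \<le> j0 \<and> j0 \<le> a ! (i0 - 1)}"
  have "(i, j) \<in> ?top \<longleftrightarrow>
    1 \<le> i \<and> i \<le> length c \<and> length c - i < length a \<and> 1 \<le> j \<and> j \<le> row a (length c - i)"
  proof
    assume "(i, j) \<in> ?top"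
    then show "1 \<le> i \<and> i \<le> length c \<and> length c - i < length a \<and> 1 \<le> j \<and> j \<le> row a (length c - i)"
      using assms by (auto simp: row_def rev_nth)
  next
    assume R: "1 \<le> i \<and> i \<le> length c \<and> length c - i < length a \<and> 1 \<le> j \<and> j \<le> row a (length c - i)"
    show "(i, j) \<in> ?top"
    proof (intro CollectI exI conjI)
      show "(i, j) = (length c - length a + (i - (length c - length a)), j)"
        using R by auto
      show "j \<le> a ! (i - (length c - length a) - 1)"
        using R assms by (auto simp: row_def rev_nth ac_simps)
    qed (use R in auto)
  qed
  moreover have "(i, j) \<in> diagram c \<longleftrightarrow>
    1 \<le> i \<and> i \<le> length c \<and> 1 \<le> j \<and> j \<le> row c (length c - i)"
    by (auto simp: diagram_def row_def rev_nth)
  ultimately show ?thesis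
    unfolding skew_def by (auto simp: row_def)
qed

lemma SEset_skew_rows:
  assumes "length a \<le> length c" and "j \<in> SEset (skew c a)"
  obtains R1 R2 where "R2 < R1" "row a R1 < j" "row c R1 = j" "row a R2 = j" "j < row c R2"
    and "\<forall>b. row a b < j \<longrightarrow> row c b \<le> j"
proof -
  note skew = mem_skew_iff[OF assms(1)]
  from assms(2) obtain i i' where notE: "j \<notin> Eset (skew c a)"
    and box: "(i, j) \<in> skew c a" and box': "(i', j + 1) \<in> skew c a" and "i < i'"
    unfolding SEset_def by blast
  have no_E: "\<forall>b. row a b < j \<longrightarrow> row c b \<le> j"
  proof (intro allI impI)
    fix b
    assume "row a b < j"
    moreover have "b < length c" if "j < row c b"
      using that by (auto simp: row_def split: if_splits)
    ultimately have "j < row c b \<Longrightarrow> (length c - b, j) \<in> skew c a \<and> (length c - b, j + 1) \<in> skew c a"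
      by (auto simp: skew)
    then show "row c b \<le> j"
      using notE unfolding Eset_def by force
  qed
  show ?thesis
  proof
    show "length c - i' < length c - i"
      using box box' \<open>i < i'\<close> by (auto simp: skew)
    show "row a (length c - i) < j" "row c (length c - i) = j"
      using box no_E by (auto simp: skew dest: spec[of _ "length c - i"])
    show "row a (length c - i') = j" "j < row c (length c - i')"
      using box' no_E by (auto simp: skew dest: spec[of _ "length c - i'"])
  qed (fact no_E)
qed

lemma SE_crossing_times:
  assumes act: "fold top_op u (Some \<alpha>) = Some \<beta>"
    and "R2 < R1" "row \<alpha> R1 < j" "row \<beta> R1 = j" "row \<alpha> R2 = j" "j < row \<beta> R2"
  obtains T1 T2 where "T2 < T1" "T1 < length u" "u ! T1 = j" "u ! T2 = Suc j"
    "rows_at \<alpha> u T1 R1 = j - 1" "\<forall>b>R2. rows_at \<alpha> u T2 b \<noteq> j"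
proof -
  have defined: "fold top_op u (Some \<alpha>) \<noteq> None" using act by simp
  note L_end = rows_at_end[OF act]
  obtain T2 where T2: "T2 < length u" "u ! T2 = Suc j"
    and box2: "adds_box (Suc j) (rows_at \<alpha> u T2) (rows_at \<alpha> u (Suc T2)) R2"
    using rows_at_crossing[OF defined, of 0 "length u" R2 "Suc j"] assms L_end by auto
  obtain T1 where T1: "T1 < length u" "u ! T1 = j"
    and box1: "adds_box j (rows_at \<alpha> u T1) (rows_at \<alpha> u (Suc T1)) R1"
    using rows_at_crossing[OF defined, of 0 "length u" R1 j] assms L_end by auto
  have above_T2: "\<forall>b>R2. rows_at \<alpha> u T2 b \<noteq> j"
    using box2 assms(3) by (auto simp: adds_box_def)
  have "T2 < T1"
  proof (rule ccontr)
    assume "\<not> T2 < T1"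
    then have "Suc T1 \<le> T2" using T1 T2 by (cases "T1 = T2") auto
    moreover have "rows_at \<alpha> u (Suc T1) R1 = rows_at \<alpha> u (length u) R1"
      using box1 L_end assms(4) by (simp add: adds_box_def)
    ultimately have "rows_at \<alpha> u T2 R1 = j"
      using rows_at_squeeze[OF defined, of "Suc T1" T2 "length u" R1] box1 T2(1)
      by (simp add: adds_box_def)
    with above_T2 \<open>R2 < R1\<close> show False by blast
  qed
  with that T1 T2 box1 above_T2 show ?thesis by (auto simp: adds_box_def)
qed

lemma rev_hookword_unique:
  assumes "rev_hookword k w" and "rev_hookword k' w"
  shows "k = k'"
proof -
  have "\<not> k < k'" if hook: "rev_hookword k w" and hook': "rev_hookword k' w" for k k'
  proof
    assume "k < k'"
    have "take (Suc k') w ! k \<le> take (Suc k') w ! Suc k"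
      using hook' \<open>k < k'\<close> by (intro sorted_nth_mono) (auto simp: rev_hookword_def)
    moreover have "drop k w ! 0 > drop k w ! 1"
      using hook \<open>k < k'\<close> hook'
      by (intro sorted_wrt_nth_less[of "(>)"]) (auto simp: rev_hookword_def)
    ultimately show False
      using \<open>k < k'\<close> hook' by (simp add: rev_hookword_def)
  qed
  with assms show ?thesis by (meson linorder_neqE_nat)
qed

definition up_down :: "nat \<Rightarrow> nat list \<Rightarrow> bool" where
  "up_down p u \<longleftrightarrow> p \<le> length u \<and> sorted_wrt (<) (take p u) \<and> sorted_wrt (\<ge>) (drop p u)"

lemma rev_hookword_up_down:
  assumes "rev_hookword k w"
  shows "up_down (length w - k) (rev w)" and "leg w = set (take (length w - k) (rev w))"
proof -
  have "sorted (take k w)"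
    using assms sorted_wrt_take[of "(\<le>)" "take (Suc k) w" k] by (simp add: rev_hookword_def min_def)
  with assms show "up_down (length w - k) (rev w)"
    by (simp add: up_down_def rev_hookword_def flip: rev_drop rev_take add: sorted_wrt_rev)
  have "leg w = set (drop k w)"
    unfolding leg_def using assms rev_hookword_unique by (metis the_equality)
  then show "leg w = set (take (length w - k) (rev w))"
    by (simp flip: rev_drop)
qed

lemma up_down_descent_in_arm:
  assumes "up_down p u" "m < m'" "m' < length u" "u ! m' \<le> u ! m"
  shows "p \<le> m'"
proof (rule ccontr)
  assume "\<not> p \<le> m'"
  then have "take p u ! m < take p u ! m'"
    using assms by (intro sorted_wrt_nth_less[of "(<)"]) (auto simp: up_down_def)
  with assms \<open>\<not> p \<le> m'\<close> show False by simp
qed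

lemma up_down_arm_antimono:
  assumes "up_down p u" "p \<le> m" "m < m'" "m' < length u"
  shows "u ! m' \<le> u ! m"
proof -
  have "drop p u ! (m' - p) \<le> drop p u ! (m - p)"
    using assms sorted_wrt_nth_less[of "(\<ge>)" "drop p u" "m - p" "m' - p"]
    by (auto simp: up_down_def)
  with assms show ?thesis by simp
qed

lemma leg_letter_row_below:
  assumes act: "fold top_op u (Some \<alpha>) = Some \<beta>"
    and no_E: "\<forall>b. row \<alpha> b < j \<longrightarrow> row \<beta> b \<le> j"
    and box0: "adds_box j (rows_at \<alpha> u T0) (rows_at \<alpha> u (Suc T0)) R0"
    and "T0 < T2" "T2 < length u" "row \<alpha> R2 = j" "\<forall>b>R2. rows_at \<alpha> u T2 b \<noteq> j"
  shows "R0 < R2"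
proof -
  let ?L = "rows_at \<alpha> u"
  have defined: "fold top_op u (Some \<alpha>) \<noteq> None" using act by simp
  note L_end = rows_at_end[OF act]
  have mono: "?L m b \<le> ?L m' b" if "m \<le> m'" for m m' b
    using monoD[OF rows_at_mono[OF defined] that] .
  have "?L (Suc T0) R0 = ?L (length u) R0"
    using box0 mono[of 0 T0 R0] mono[of "Suc T0" "length u" R0] no_E L_end assms(4,5)
    by (auto simp: adds_box_def intro: le_antisym)
  then have "?L T2 R0 = j"
    using rows_at_squeeze[OF defined, of "Suc T0" T2 "length u" R0] box0 assms(4,5)
    by (simp add: adds_box_def)
  moreover have "R0 \<noteq> R2"
    using box0 mono[of 0 T0 R2] assms(6) by (auto simp: adds_box_def)
  ultimately show "R0 < R2"
    using assms(7) by (metis linorder_neqE_nat)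
qed

lemma SE_rows_no_leg_letter:
  assumes act: "fold top_op u (Some \<alpha>) = Some \<beta>" and shape: "up_down p u"
    and leg: "T0 < p" "u ! T0 = j"
    and SE: "R2 < R1" "row \<alpha> R1 < j" "row \<beta> R1 = j" "row \<alpha> R2 = j" "j < row \<beta> R2"
    and no_E: "\<forall>b. row \<alpha> b < j \<longrightarrow> row \<beta> b \<le> j"
  shows False
proof -
  let ?L = "rows_at \<alpha> u"
  have defined: "fold top_op u (Some \<alpha>) \<noteq> None" using act by simp
  note L_end = rows_at_end[OF act]
  have mono: "?L m b \<le> ?L m' b" if "m \<le> m'" for m m' b
    using monoD[OF rows_at_mono[OF defined] that] .
  have T0: "T0 < length u" using leg shape by (simp add: up_down_def)
  obtain T1 T2 where "T2 < T1" "T1 < length u" "u ! T1 = j" "u ! T2 = Suc j"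
    and T1_row: "?L T1 R1 = j - 1" and above_T2: "\<forall>b>R2. ?L T2 b \<noteq> j"
    using SE_crossing_times[OF act SE] .
  then have "p \<le> T1"
    using up_down_descent_in_arm[OF shape] by simp
  have "T0 < T2"
    using up_down_descent_in_arm[OF shape, of T2 T0] leg T0 \<open>u ! T2 = Suc j\<close>
    by (cases T2 T0 rule: linorder_cases) auto
  obtain R0 where box0: "adds_box j (?L T0) (?L (Suc T0)) R0"
    using rows_at_step[OF defined T0] leg by auto
  have "R0 < R2"
    using leg_letter_row_below[OF act no_E box0 \<open>T0 < T2\<close>] \<open>T2 < T1\<close> \<open>T1 < length u\<close>
      SE(4) above_T2 by simp
  consider "j = 1" | "2 \<le> j"
    using box0 by (force simp: adds_box_def)
  then show False
  proof cases
    case 1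
    then show False
      using box0 \<open>R0 < R2\<close> mono[of 0 T0 R2] SE by (auto simp: adds_box_def)
  next
    case 2
    have "?L T0 R1 \<noteq> j - 1"
      using box0 2 \<open>R0 < R2\<close> SE by (auto simp: adds_box_def)
    moreover have "?L T0 R1 \<le> j - 1"
      using mono[of T0 T1 R1] leg \<open>p \<le> T1\<close> T1_row by simp
    ultimately obtain T3 where "T0 \<le> T3" "T3 < T1" "u ! T3 = j - 1"
      using rows_at_crossing[OF defined, of T0 T1 R1 "j - 1"] leg \<open>p \<le> T1\<close> \<open>T1 < length u\<close> T1_row
      by auto
    moreover from this have "T0 \<noteq> T3" using leg 2 by auto
    ultimately have "p \<le> T3"
      using up_down_descent_in_arm[OF shape, of T0 T3] leg \<open>T1 < length u\<close> by simp
    then have "u ! T1 \<le> u ! T3"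
      using up_down_arm_antimono[OF shape] \<open>T3 < T1\<close> \<open>T1 < length u\<close> by simp
    then show False
      using \<open>u ! T1 = j\<close> \<open>u ! T3 = j - 1\<close> 2 by simp
  qed
qed

theorem mainTheorem13:
  fixes \<alpha> \<beta> w :: "nat list" and n j :: nat
  assumes "is_composition \<alpha>" and "is_composition \<beta>"
    and "cless \<alpha> \<beta>"
    and "nc_border_strip (skew \<beta> \<alpha>)"
    and "card (skew \<beta> \<alpha>) = n"
    and "w \<in> CRHW n"
    and "word_act w \<alpha> = Some \<beta>"
    and "j \<in> SEset (skew \<beta> \<alpha>)"
  shows "j \<notin> leg w"
proof
  assume "j \<in> leg w"
  obtain k where hook: "rev_hookword k w"
    using assms(6) by (auto simp: CRHW_def is_rev_hookword_def)
  have act: "fold top_op (rev w) (Some \<alpha>) = Some \<beta>"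
    using assms(7) by (simp add: word_act_def foldr_conv_fold)
  obtain T0 where "T0 < length w - k" "rev w ! T0 = j"
    using \<open>j \<in> leg w\<close> rev_hookword_up_down(2)[OF hook] by (auto simp: in_set_conv_nth)
  moreover obtain R1 R2 where "R2 < R1" "row \<alpha> R1 < j" "row \<beta> R1 = j" "row \<alpha> R2 = j"
    "j < row \<beta> R2" "\<forall>b. row \<alpha> b < j \<longrightarrow> row \<beta> b \<le> j"
    using SEset_skew_rows[OF length_le_fold_top_op[OF act] assms(8)] .
  ultimately show False
    using SE_rows_no_leg_letter[OF act rev_hookword_up_down(1)[OF hook]] by blast
qed

end
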